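(* Let $H$ be an edge-critical graph with $\chi(H)=r+1\ge3$. For every $r$-tuple $S=(S_1,\dots,S_r)$ of pairwise disjoint subsets of $[n]$ with $|S_1|>v_H$ and every graph $Q\subseteq K_n$ all of whose edges have both endpoints in $S_1$, \[ |\mathcal{F}_Q^{\mathrm{low}}[\mathrm{ext}(S)]|\ge\Big(1-\frac{v_H^2\,\Delta(Q)}{|S_1|-v_H}\Big)\cdot e(Q)\cdot N(H,K_S^+), \] where $K_S^+=\mathrm{ext}(S)\cup\{uv\}$ for two distinct vertices $u,v\in S_1$.
   Context: Graphs are identified with edge sets. $\mathrm{ext}(S)$ is the set of pairs of vertices meeting two distinct $S_i$. $\mathcal{H}$ is the family of all copies of $H$ in $K_n$ (as edge sets). $\mathcal{H}_Q^{\mathrm{low}}=\{A\in\mathcal{H}: |A\cap Q|=1 \text{ and } Q[V(A)] \text{ has exactly one edge}\}$ and $\mathcal{F}_Q^{\mathrm{low}}=\{A\setminus Q: A\in\mathcal{H}_Q^{\mathrm{low}}\}$. For a family $\mathcal{F}$ of edge sets and a graph $G$, $\mathcal{F}[G]=\{\omega\in\mathcal{F}:\omega\subseteq G\}$. $N(H,G)$ is the number of copies of $H$ in $G$; $\Delta(Q)$ is the maximum degree. *)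

theory Defs
  imports Complex_Main
begin

definition simple_graph :: "'a set \<Rightarrow> 'a set set \<Rightarrow> bool" where
  "simple_graph V E \<longleftrightarrow> finite V \<and> (\<forall>e\<in>E. \<exists>x y. x \<noteq> y \<and> x \<in> V \<and> y \<in> V \<and> e = {x, y})"

definition colorable :: "'a set \<Rightarrow> 'a set set \<Rightarrow> nat \<Rightarrow> bool" where
  "colorable V E k \<longleftrightarrow> (\<exists>f. (\<forall>x\<in>V. f x < k) \<and> (\<forall>x\<in>V. \<forall>y\<in>V. {x, y} \<in> E \<longrightarrow> f x \<noteq> f y))"

definition chromatic_number :: "'a set \<Rightarrow> 'a set set \<Rightarrow> nat" where
  "chromatic_number V E = (LEAST k. colorable V E k)"

definition edge_critical :: "'a set \<Rightarrow> 'a set set \<Rightarrow> bool" where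
  "edge_critical V E \<longleftrightarrow> (\<exists>e\<in>E. chromatic_number V (E - {e}) < chromatic_number V E)"

definition Kn :: "nat \<Rightarrow> nat set set" where
  "Kn n = {{x, y} | x y. x \<noteq> y \<and> x \<in> {1..n} \<and> y \<in> {1..n}}"

definition copies :: "'a set \<Rightarrow> 'a set set \<Rightarrow> nat \<Rightarrow> nat set set set" where
  "copies VH EH n = {(\<lambda>e. \<phi> ` e) ` EH | \<phi>. inj_on \<phi> VH \<and> \<phi> ` VH \<subseteq> {1..n}}"

definition Ncop :: "'a set \<Rightarrow> 'a set set \<Rightarrow> nat \<Rightarrow> nat set set \<Rightarrow> nat" where
  "Ncop VH EH n G = card {A \<in> copies VH EH n. A \<subseteq> G}"

definition verts :: "nat set set \<Rightarrow> nat set" where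
  "verts A = \<Union>A"

definition induced :: "nat set set \<Rightarrow> nat set \<Rightarrow> nat set set" where
  "induced Q W = {e \<in> Q. e \<subseteq> W}"

definition H_low :: "'a set \<Rightarrow> 'a set set \<Rightarrow> nat \<Rightarrow> nat set set \<Rightarrow> nat set set set" where
  "H_low VH EH n Q = {A \<in> copies VH EH n. card (A \<inter> Q) = 1 \<and> card (induced Q (verts A)) = 1}"

definition F_low :: "'a set \<Rightarrow> 'a set set \<Rightarrow> nat \<Rightarrow> nat set set \<Rightarrow> nat set set set" where
  "F_low VH EH n Q = (\<lambda>A. A - Q) ` H_low VH EH n Q"

definition restrict_fam :: "nat set set set \<Rightarrow> nat set set \<Rightarrow> nat set set set" where
  "restrict_fam F G = {\<omega> \<in> F. \<omega> \<subseteq> G}"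

text \<open>ext(S) for an r-tuple S_1..S_r, here indexed as S 0, ..., S (r-1).\<close>
definition ext :: "nat \<Rightarrow> (nat \<Rightarrow> nat set) \<Rightarrow> nat set set" where
  "ext r S = {{x, y} | x y. \<exists>i<r. \<exists>j<r. i \<noteq> j \<and> x \<in> S i \<and> y \<in> S j}"

definition degree :: "nat set set \<Rightarrow> nat \<Rightarrow> nat" where
  "degree Q v = card {e \<in> Q. v \<in> e}"

definition max_degree :: "nat set set \<Rightarrow> nat" where
  "max_degree Q = Max (insert 0 (degree Q ` verts Q))"

end

theory Submission
  imports Defs "HOL-Combinatorics.Transposition"
begin

text \<open>
  For an edge e of Q let C(e) be the set of copies of H in ext(S) + e. As ext(S) is r-partite and
  \<chi>(H) = r + 1, every copy in C(e) contains e, and each endpoint of e lies on a second edge of the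
  copy (otherwise recolouring that endpoint would r-colour H). Transpositions inside S_1 fix ext(S),
  so |C(e)| = N(H, K_S^+) for every e.

  Call a copy in C(e) high if its vertex set spans a second edge of Q. It then has a vertex w outside
  e with a Q-neighbour in the copy. Swapping w with a vertex z of S_1 outside the copy (at least
  |S_1| - v_H choices) gives a copy A' in C(e) with z in V(A') and w in N_Q(V(A')), and (A, z) is
  recovered from (A', z, w). Hence |S_1| - v_H times the number of high copies is at most
  v_H^2 \<Delta>(Q) |C(e)|. Every other copy A yields A - {e} in F_Q^low[ext(S)], and (e, A) is recovered
  from A - {e} because e is the only edge of Q spanned by V(A - {e}) = V(A).
\<close>

lemma simple_graph_edge_subset:
  assumes "simple_graph V E" and "e \<in> E"
  shows "e \<subseteq> V"
proof -
  obtain x y where "x \<in> V" "y \<in> V" "e = {x, y}"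
    using assms unfolding simple_graph_def by blast
  then show ?thesis by simp
qed

lemma simple_graph_edge_neq:
  assumes "simple_graph V E" and "{x, y} \<in> E"
  shows "x \<noteq> y"
proof
  assume "x = y"
  obtain p q where "p \<noteq> q" "{x, y} = {p, q}" using assms unfolding simple_graph_def by blast
  with \<open>x = y\<close> show False by (auto simp: doubleton_eq_iff)
qed

definition relabel :: "('a \<Rightarrow> 'b) \<Rightarrow> 'a set set \<Rightarrow> 'b set set" where
  "relabel \<phi> G = image \<phi> ` G"

lemma relabel_transpose_involutory [simp]:
  "relabel (transpose a b) (relabel (transpose a b) G) = G"
  by (simp add: relabel_def image_image)

lemma verts_relabel: "verts (relabel \<phi> A) = \<phi> ` verts A"
  by (auto simp: verts_def relabel_def)

lemma copies_subset_Pow: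
  assumes "simple_graph VH EH"
  shows "copies VH EH n \<subseteq> Pow (Pow {1..n})"
proof
  fix A assume "A \<in> copies VH EH n"
  then obtain \<psi> where "\<psi> ` VH \<subseteq> {1..n}" "A = (\<lambda>e. \<psi> ` e) ` EH"
    unfolding copies_def by blast
  with simple_graph_edge_subset[OF assms] show "A \<in> Pow (Pow {1..n})" by blast
qed

lemma finite_copies: "simple_graph VH EH \<Longrightarrow> finite (copies VH EH n)"
  using finite_subset[OF copies_subset_Pow] by simp

lemma card_verts_copy_le:
  assumes "simple_graph VH EH" and "A \<in> copies VH EH n"
  shows "finite (verts A)" and "card (verts A) \<le> card VH"
proof -
  obtain \<psi> where "A = relabel \<psi> EH"
    using assms(2) unfolding copies_def relabel_def by blast
  then have sub: "verts A \<subseteq> \<psi> ` VH"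
    using assms(1) by (auto simp: verts_def relabel_def dest: simple_graph_edge_subset)
  have fin: "finite (\<psi> ` VH)" using assms(1) unfolding simple_graph_def by blast
  show "finite (verts A)" using sub fin by (rule finite_subset)
  have "card (verts A) \<le> card (\<psi> ` VH)" using fin sub by (rule card_mono)
  also have "\<dots> \<le> card VH" by (rule card_image_le) (use assms(1) in \<open>simp add: simple_graph_def\<close>)
  finally show "card (verts A) \<le> card VH" .
qed

lemma relabel_copy:
  assumes "A \<in> copies VH EH n" and "inj_on \<phi> {1..n}" and "\<phi> ` {1..n} \<subseteq> {1..n}"
  shows "relabel \<phi> A \<in> copies VH EH n"
proof -
  obtain \<psi> where \<psi>: "inj_on \<psi> VH" "\<psi> ` VH \<subseteq> {1..n}" "A = relabel \<psi> EH"
    using assms(1) unfolding copies_def relabel_def by blast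
  have "inj_on (\<phi> \<circ> \<psi>) VH" using comp_inj_on[OF \<psi>(1) inj_on_subset[OF assms(2) \<psi>(2)]] .
  moreover have "(\<phi> \<circ> \<psi>) ` VH \<subseteq> {1..n}" using \<psi>(2) assms(3) by auto
  moreover have "relabel \<phi> A = (\<lambda>e. (\<phi> \<circ> \<psi>) ` e) ` EH"
    unfolding \<psi>(3) relabel_def by (simp add: image_image image_comp)
  ultimately show ?thesis unfolding copies_def by blast
qed

lemma Ncop_le_Ncop_relabel:
  assumes "simple_graph VH EH" and "inj_on \<phi> {1..n}" and "\<phi> ` {1..n} \<subseteq> {1..n}"
  shows "Ncop VH EH n G \<le> Ncop VH EH n (relabel \<phi> G)"
  unfolding Ncop_def
proof (rule card_inj_on_le)
  have "inj_on (relabel \<phi>) (Pow (Pow {1..n}))"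
    using assms(2) unfolding relabel_def by (intro inj_on_image_Pow)
  then show "inj_on (relabel \<phi>) {A \<in> copies VH EH n. A \<subseteq> G}"
    by (rule inj_on_subset) (use copies_subset_Pow[OF assms(1)] in blast)
  show "relabel \<phi> ` {A \<in> copies VH EH n. A \<subseteq> G} \<subseteq> {A \<in> copies VH EH n. A \<subseteq> relabel \<phi> G}"
    using relabel_copy[OF _ assms(2,3)] by (auto simp: relabel_def)
  show "finite {A \<in> copies VH EH n. A \<subseteq> relabel \<phi> G}"
    using finite_copies[OF assms(1)] by simp
qed

lemma Ncop_relabel_transpose:
  assumes "simple_graph VH EH" and "a \<in> {1..n}" and "b \<in> {1..n}"
  shows "Ncop VH EH n (relabel (transpose a b) G) = Ncop VH EH n G"
proof -
  have "inj_on (transpose a b) {1..n}" and "transpose a b ` {1..n} \<subseteq> {1..n}"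
    using assms(2,3) by simp_all
  from Ncop_le_Ncop_relabel[OF assms(1) this, of G]
    Ncop_le_Ncop_relabel[OF assms(1) this, of "relabel (transpose a b) G"]
  show ?thesis by simp
qed

lemma colorable_if_copy_colored:
  assumes "simple_graph VH EH" and "A \<in> copies VH EH n" and "\<And>x. c x < k"
    and "\<And>x y. {x, y} \<in> A \<Longrightarrow> x \<noteq> y \<Longrightarrow> c x \<noteq> c y"
  shows "colorable VH EH k"
proof -
  obtain \<psi> where \<psi>: "inj_on \<psi> VH" "A = (\<lambda>e. \<psi> ` e) ` EH"
    using assms(2) unfolding copies_def by blast
  have "c (\<psi> x) \<noteq> c (\<psi> y)" if "x \<in> VH" "y \<in> VH" "{x, y} \<in> EH" for x y
  proof -
    have "\<psi> ` {x, y} \<in> A" using \<psi>(2) that(3) by blast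
    then have "{\<psi> x, \<psi> y} \<in> A" by simp
    moreover have "\<psi> x \<noteq> \<psi> y"
      using simple_graph_edge_neq[OF assms(1) that(3)] that(1,2) \<psi>(1) by (auto dest: inj_onD)
    ultimately show ?thesis by (rule assms(4))
  qed
  then show ?thesis unfolding colorable_def using assms(3) by (intro exI[of _ "c \<circ> \<psi>"]) simp
qed

lemma not_colorable_below_chromatic_number:
  assumes "k < chromatic_number V E"
  shows "\<not> colorable V E k"
  using assms unfolding chromatic_number_def by (metis not_less_Least)

definition part_index :: "nat \<Rightarrow> (nat \<Rightarrow> nat set) \<Rightarrow> nat \<Rightarrow> nat" where
  "part_index r S x = (if \<exists>i<r. x \<in> S i then LEAST i. i < r \<and> x \<in> S i else 0)"

lemma part_index_eq:
  assumes "\<forall>i<r. \<forall>j<r. i \<noteq> j \<longrightarrow> S i \<inter> S j = {}" and "i < r" and "x \<in> S i"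
  shows "part_index r S x = i"
proof -
  have "(LEAST i. i < r \<and> x \<in> S i) = i"
    by (rule Least_equality) (use assms in \<open>auto simp: not_less[symmetric]\<close>)
  then show ?thesis using assms(2,3) unfolding part_index_def by auto
qed

lemma part_index_less: "0 < r \<Longrightarrow> part_index r S x < r"
  unfolding part_index_def by (auto intro: LeastI2_wellorder)

lemma ext_edge_cases:
  assumes "f \<in> ext r S"
  obtains x y i j where "f = {x, y}" "i < r" "j < r" "i \<noteq> j" "x \<in> S i" "y \<in> S j"
  using assms unfolding ext_def by blast

lemma part_index_ext_neq:
  assumes "\<forall>i<r. \<forall>j<r. i \<noteq> j \<longrightarrow> S i \<inter> S j = {}" and "{x, y} \<in> ext r S"
  shows "part_index r S x \<noteq> part_index r S y"
  using assms(2)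
proof (rule ext_edge_cases)
  fix x' y' i j assume *: "{x, y} = {x', y'}" "i < r" "j < r" "i \<noteq> j" "x' \<in> S i" "y' \<in> S j"
  then have "part_index r S x' \<noteq> part_index r S y'" using part_index_eq[OF assms(1)] by simp
  with *(1) show ?thesis by (auto simp: doubleton_eq_iff)
qed

lemma ext_not_within_part:
  assumes "\<forall>i<r. \<forall>j<r. i \<noteq> j \<longrightarrow> S i \<inter> S j = {}" and "k < r" and "f \<in> ext r S"
  shows "\<not> f \<subseteq> S k"
  using assms(3)
proof (rule ext_edge_cases)
  fix x y i j assume *: "f = {x, y}" "i < r" "j < r" "i \<noteq> j" "x \<in> S i" "y \<in> S j"
  show ?thesis
  proof
    assume "f \<subseteq> S k"
    with * have "x \<in> S i \<inter> S k" "y \<in> S j \<inter> S k" by auto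
    with * assms(1,2) show False by blast
  qed
qed

lemma transpose_mem_part:
  assumes "\<forall>i<r. \<forall>j<r. i \<noteq> j \<longrightarrow> S i \<inter> S j = {}" and "k < r" "a \<in> S k" "b \<in> S k"
    and "i < r" "x \<in> S i"
  shows "transpose a b x \<in> S i"
proof (cases "x = a \<or> x = b")
  case True
  then have "i = k" using assms by blast
  with True show ?thesis using assms(3,4) by auto
next
  case False
  with assms(6) show ?thesis by simp
qed

lemma relabel_transpose_ext:
  assumes "\<forall>i<r. \<forall>j<r. i \<noteq> j \<longrightarrow> S i \<inter> S j = {}" and "k < r" "a \<in> S k" "b \<in> S k"
  shows "relabel (transpose a b) (ext r S) = ext r S"
proof -
  have sub: "relabel (transpose a b) (ext r S) \<subseteq> ext r S"
  proof
    fix g assume "g \<in> relabel (transpose a b) (ext r S)"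
    then obtain f where f: "f \<in> ext r S" "g = transpose a b ` f" unfolding relabel_def by blast
    from f(1) show "g \<in> ext r S"
    proof (rule ext_edge_cases)
      fix x y i j assume *: "f = {x, y}" "i < r" "j < r" "i \<noteq> j" "x \<in> S i" "y \<in> S j"
      then have "transpose a b x \<in> S i" "transpose a b y \<in> S j"
        using transpose_mem_part[OF assms] by auto
      with * f(2) show ?thesis unfolding ext_def by auto
    qed
  qed
  then have "ext r S \<subseteq> relabel (transpose a b) (ext r S)"
    by (metis relabel_transpose_involutory relabel_def image_mono)
  with sub show ?thesis by (rule antisym)
qed

definition neighbours :: "nat set set \<Rightarrow> nat set \<Rightarrow> nat set" where
  "neighbours Q X = {w. \<exists>t\<in>X. {w, t} \<in> Q}"

lemma finite_neighbours: "finite (verts Q) \<Longrightarrow> finite (neighbours Q X)"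
  by (rule finite_subset[of _ "verts Q"]) (auto simp: neighbours_def verts_def)

lemma card_neighbours_vertex_le:
  assumes "finite (verts Q)"
  shows "card {w. {w, t} \<in> Q} \<le> max_degree Q"
proof (cases "t \<in> verts Q")
  case True
  have "finite Q" using assms unfolding verts_def by (rule finite_UnionD)
  have "inj_on (\<lambda>w. {w, t}) {w. {w, t} \<in> Q}"
    by (rule inj_onI) (auto simp: doubleton_eq_iff)
  then have "card {w. {w, t} \<in> Q} \<le> card {e \<in> Q. t \<in> e}"
    by (rule card_inj_on_le) (use \<open>finite Q\<close> in auto)
  also have "\<dots> \<le> max_degree Q"
    unfolding max_degree_def degree_def[symmetric] using assms True by (intro Max_ge) auto
  finally show ?thesis .
next
  case False
  then have "{w. {w, t} \<in> Q} = {}" unfolding verts_def by blast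
  then show ?thesis by simp
qed

lemma card_neighbours_le:
  assumes "finite (verts Q)" and "finite X"
  shows "card (neighbours Q X) \<le> card X * max_degree Q"
proof -
  have "card (neighbours Q X) = card (\<Union>t\<in>X. {w. {w, t} \<in> Q})"
    unfolding neighbours_def by (rule arg_cong[where f = card]) blast
  also have "\<dots> \<le> (\<Sum>t\<in>X. card {w. {w, t} \<in> Q})" using assms(2) by (rule card_UN_le)
  also have "\<dots> \<le> (\<Sum>t\<in>X. max_degree Q)"
    by (rule sum_mono) (rule card_neighbours_vertex_le[OF assms(1)])
  finally show ?thesis by simp
qed

lemma double_counting_le:
  assumes "finite B" and "\<And>A. A \<in> B \<Longrightarrow> finite (X A)"
    and "finite C" and "\<And>A'. A' \<in> C \<Longrightarrow> finite (Y A')"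
    and "inj_on g (Sigma B X)" and "g ` Sigma B X \<subseteq> Sigma C Y"
    and "\<And>A. A \<in> B \<Longrightarrow> a \<le> card (X A)" and "\<And>A'. A' \<in> C \<Longrightarrow> card (Y A') \<le> b"
  shows "a * card B \<le> b * card C"
proof -
  have "a * card B = (\<Sum>A\<in>B. a)" by simp
  also have "\<dots> \<le> (\<Sum>A\<in>B. card (X A))" using assms(7) by (rule sum_mono)
  also have "\<dots> = card (Sigma B X)" using assms(1,2) by simp
  also have "\<dots> \<le> card (Sigma C Y)"
    using assms(5,6) by (rule card_inj_on_le) (use assms(3,4) in auto)
  also have "\<dots> = (\<Sum>A'\<in>C. card (Y A'))" using assms(3,4) by simp
  also have "\<dots> \<le> (\<Sum>A'\<in>C. b)" using assms(8) by (rule sum_mono)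
  finally show ?thesis by (simp add: mult.commute)
qed

locale partite_host =
  fixes VH :: "'h set" and EH :: "'h set set" and r n :: nat and S :: "nat \<Rightarrow> nat set"
  assumes simple: "simple_graph VH EH"
    and chromatic: "chromatic_number VH EH = r + 1"
    and two_le_r: "2 \<le> r"
    and parts_sub: "\<forall>i<r. S i \<subseteq> {1..n}"
    and parts_disj: "\<forall>i<r. \<forall>j<r. i \<noteq> j \<longrightarrow> S i \<inter> S j = {}"
begin

definition copies_through :: "nat set \<Rightarrow> nat set set set" where
  "copies_through e = {A \<in> copies VH EH n. A \<subseteq> ext r S \<union> {e}}"

lemma finite_copies_through: "finite (copies_through e)"
  unfolding copies_through_def using finite_copies[OF simple] by simp

lemma not_r_colorable: "\<not> colorable VH EH r"
  using not_colorable_below_chromatic_number[of r VH EH] by (simp add: chromatic)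

lemma no_copy_in_ext:
  assumes "A \<in> copies VH EH n"
  shows "\<not> A \<subseteq> ext r S"
proof
  assume "A \<subseteq> ext r S"
  with assms have "colorable VH EH r"
    using part_index_less part_index_ext_neq[OF parts_disj] two_le_r
    by (intro colorable_if_copy_colored[OF simple, of A n "part_index r S"]) auto
  with not_r_colorable show False ..
qed

lemma edge_mem_copies_through: "A \<in> copies_through e \<Longrightarrow> e \<in> A"
  using no_copy_in_ext unfolding copies_through_def by blast

lemma endpoint_mem_verts_other_edges:
  assumes A: "A \<in> copies_through {p, q}" and "p \<noteq> q"
  shows "p \<in> verts (A - {{p, q}})"
proof (rule ccontr)
  assume isolated: "p \<notin> verts (A - {{p, q}})"
  \<comment> \<open>then p has q as its only neighbour in A, so p may take any colour other than that of q\<close>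
  define c where "c = (part_index r S)(p := if part_index r S q = 0 then 1 else 0)"
  have "colorable VH EH r"
  proof (rule colorable_if_copy_colored[OF simple, of A n c])
    show "A \<in> copies VH EH n" using A unfolding copies_through_def by simp
    show "c x < r" for x
      unfolding c_def using part_index_less[of r S] two_le_r by auto
    show "c x \<noteq> c y" if "{x, y} \<in> A" "x \<noteq> y" for x y
    proof (cases "{x, y} = {p, q}")
      case True
      with \<open>p \<noteq> q\<close> \<open>x \<noteq> y\<close> show ?thesis by (auto simp: c_def doubleton_eq_iff)
    next
      case False
      with that isolated have "x \<noteq> p" "y \<noteq> p" unfolding verts_def by auto
      moreover have "{x, y} \<in> ext r S" using False that(1) A unfolding copies_through_def by blast
      ultimately show ?thesis using part_index_ext_neq[OF parts_disj] by (simp add: c_def)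
    qed
  qed
  with not_r_colorable show False ..
qed

lemma Ncop_ext_transpose_edge:
  assumes "k < r" and "a \<in> S k" and "b \<in> S k"
  shows "Ncop VH EH n (ext r S \<union> {{transpose a b x, transpose a b y}})
    = Ncop VH EH n (ext r S \<union> {{x, y}})"
proof -
  have "relabel (transpose a b) (ext r S \<union> {{x, y}})
      = ext r S \<union> {{transpose a b x, transpose a b y}}"
    using relabel_transpose_ext[OF parts_disj assms] by (simp add: relabel_def)
  moreover have "a \<in> {1..n}" "b \<in> {1..n}" using assms parts_sub by blast+
  ultimately show ?thesis using Ncop_relabel_transpose[OF simple] by metis
qed

lemma Ncop_ext_edge_within_part:
  assumes "k < r" and "x \<in> S k" "y \<in> S k" "x \<noteq> y" and "u \<in> S k" "v \<in> S k" "u \<noteq> v"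
  shows "Ncop VH EH n (ext r S \<union> {{x, y}}) = Ncop VH EH n (ext r S \<union> {{u, v}})"
proof -
  define y' where "y' = transpose x u y"
  have y': "y' \<in> S k" "y' \<noteq> u"
    using transpose_mem_part[OF parts_disj assms(1,2,5,1,3)] assms(4)
    by (auto simp: y'_def transpose_eq_iff)
  have "Ncop VH EH n (ext r S \<union> {{x, y}}) = Ncop VH EH n (ext r S \<union> {{u, y'}})"
    using Ncop_ext_transpose_edge[OF assms(1,2,5), of x y] by (simp add: y'_def)
  also have "\<dots> = Ncop VH EH n (ext r S \<union> {{u, v}})"
    using Ncop_ext_transpose_edge[OF assms(1) y'(1) assms(6), of u y'] y'(2) assms(7)
    by (simp add: transpose_eq_iff)
  finally show ?thesis .
qed

end

locale partite_host_edges = partite_host +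
  fixes Q :: "nat set set"
  assumes Q_sub: "Q \<subseteq> Kn n"
    and Q_within: "\<forall>e\<in>Q. e \<subseteq> S 0"
begin

definition low_copies_through :: "nat set \<Rightarrow> nat set set set" where
  "low_copies_through e = {A \<in> copies_through e. card (induced Q (verts A)) = 1}"

definition high_copies_through :: "nat set \<Rightarrow> nat set set set" where
  "high_copies_through e = {A \<in> copies_through e. card (induced Q (verts A)) \<noteq> 1}"

lemma S0_sub: "S 0 \<subseteq> {1..n}"
  using parts_sub two_le_r by simp

lemma Q_edge_cases:
  assumes "e \<in> Q"
  obtains x y where "x \<noteq> y" "e = {x, y}" "x \<in> S 0" "y \<in> S 0"
proof -
  obtain x y where "x \<noteq> y" "e = {x, y}" using assms Q_sub unfolding Kn_def by blast
  with that show thesis using assms Q_within by blast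
qed

lemma finite_verts_Q: "finite (verts Q)"
proof (rule finite_subset)
  show "verts Q \<subseteq> {1..n}" using Q_within S0_sub unfolding verts_def by blast
qed simp

lemma copies_through_inter_Q:
  assumes "e \<in> Q" and "A \<in> copies_through e"
  shows "A \<inter> Q = {e}"
proof -
  have "f \<notin> Q" if "f \<in> ext r S" for f
    using ext_not_within_part[OF parts_disj _ that, of 0] two_le_r Q_within by auto
  then show ?thesis
    using assms edge_mem_copies_through[OF assms(2)] unfolding copies_through_def by blast
qed

lemma high_copy_witness:
  assumes "e \<in> Q" and A: "A \<in> high_copies_through e"
  obtains w t where "{w, t} \<in> Q" "w \<noteq> t" "w \<in> verts A - e" "t \<in> verts A"
proof -
  have AC: "A \<in> copies_through e" and ne1: "card (induced Q (verts A)) \<noteq> 1"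
    using A unfolding high_copies_through_def by auto
  have "e \<in> induced Q (verts A)"
    using assms(1) edge_mem_copies_through[OF AC] unfolding induced_def verts_def by blast
  moreover have "induced Q (verts A) \<noteq> {e}" using ne1 by auto
  ultimately obtain f where "f \<in> induced Q (verts A)" "f \<noteq> e" by blast
  then have f: "f \<in> Q" "f \<subseteq> verts A" "f \<noteq> e" unfolding induced_def by auto
  obtain a b where ab: "a \<noteq> b" "f = {a, b}" using Q_edge_cases[OF f(1)] by blast
  obtain x y where xy: "e = {x, y}" using Q_edge_cases[OF assms(1)] by blast
  show thesis
  proof (cases "a \<in> e")
    case True
    with f ab xy have "b \<notin> e" by (auto simp: doubleton_eq_iff)
    with f ab show thesis using that[of b a] by (simp add: insert_commute)
  next
    case False
    with f ab show thesis using that[of a b] by simp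
  qed
qed

lemma relabel_high_copy:
  assumes "e \<in> Q" and A: "A \<in> high_copies_through e"
    and wt: "{w, t} \<in> Q" "w \<noteq> t" "w \<in> verts A - e" "t \<in> verts A" and z: "z \<in> S 0 - verts A"
  defines "A' \<equiv> relabel (transpose w z) A"
  shows "A' \<in> copies_through e" and "z \<in> verts A'" and "w \<in> neighbours Q (verts A')"
proof -
  have AC: "A \<in> copies VH EH n" "A \<subseteq> ext r S \<union> {e}"
    using A unfolding high_copies_through_def copies_through_def by auto
  have "w \<in> S 0" using wt(1) Q_within by blast
  then have wz: "w \<in> {1..n}" "z \<in> {1..n}" using z S0_sub by auto
  have "e \<subseteq> verts A"
    using edge_mem_copies_through A unfolding high_copies_through_def verts_def by blast
  then have "transpose w z ` e = e" using wt(3) z by (intro transpose_image_eq) blast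
  then have "relabel (transpose w z) (ext r S \<union> {e}) = ext r S \<union> {e}"
    using relabel_transpose_ext[OF parts_disj _ \<open>w \<in> S 0\<close>, of z] two_le_r z
    by (simp add: relabel_def)
  moreover have "A' \<subseteq> relabel (transpose w z) (ext r S \<union> {e})"
    unfolding A'_def relabel_def using AC(2) by (rule image_mono)
  ultimately have "A' \<subseteq> ext r S \<union> {e}" by simp
  moreover have "A' \<in> copies VH EH n"
    unfolding A'_def using wz by (intro relabel_copy[OF AC(1)]) auto
  ultimately show "A' \<in> copies_through e" unfolding copies_through_def by simp
  have verts_A': "verts A' = transpose w z ` verts A" unfolding A'_def by (rule verts_relabel)
  show "z \<in> verts A'" unfolding verts_A' using wt(3) by (auto intro: image_eqI[of _ _ w])
  have "transpose w z t = t" using wt(2,4) z by (intro transpose_apply_other) auto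
  then have "t \<in> verts A'" unfolding verts_A' using wt(4) by (metis imageI)
  with wt(1) show "w \<in> neighbours Q (verts A')" unfolding neighbours_def by blast
qed


lemma card_high_copies_through_le:
  assumes "e \<in> Q"
  shows "(card (S 0) - card VH) * card (high_copies_through e)
    \<le> card VH ^ 2 * max_degree Q * card (copies_through e)"
proof -
  have "\<exists>w t. {w, t} \<in> Q \<and> w \<noteq> t \<and> w \<in> verts A - e \<and> t \<in> verts A"
    if "A \<in> high_copies_through e" for A
    using high_copy_witness[OF assms that] by blast
  then obtain W T where WT: "\<And>A. A \<in> high_copies_through e \<Longrightarrow>
      {W A, T A} \<in> Q \<and> W A \<noteq> T A \<and> W A \<in> verts A - e \<and> T A \<in> verts A"
    by metis
  \<comment> \<open>recording z and W A alongside the swapped copy makes the map injective\<close>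
  define g where "g = (\<lambda>(A, z). (relabel (transpose (W A) z) A, z, W A))"
  have copy: "A \<in> copies VH EH n" if "A \<in> copies_through e" for A
    using that unfolding copies_through_def by simp
  have high: "A \<in> copies_through e" if "A \<in> high_copies_through e" for A
    using that unfolding high_copies_through_def by simp
  show ?thesis
  proof (rule double_counting_le[where g = g])
    show "finite (high_copies_through e)" "finite (copies_through e)"
      using finite_copies_through unfolding high_copies_through_def by simp_all
    show "finite (S 0 - verts A)" for A using S0_sub by (rule finite_subset[THEN finite_Diff]) simp
    show "finite (verts A' \<times> neighbours Q (verts A'))" if "A' \<in> copies_through e" for A'
      using card_verts_copy_le(1)[OF simple copy[OF that]] finite_neighbours[OF finite_verts_Q] by simp
    show "inj_on g (SIGMA A:high_copies_through e. S 0 - verts A)"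
    proof (rule inj_onI, clarsimp simp: g_def)
      fix A1 A2 z
      assume "relabel (transpose (W A2) z) A1 = relabel (transpose (W A2) z) A2"
      then show "A1 = A2" by (metis relabel_transpose_involutory)
    qed
    show "g ` (SIGMA A:high_copies_through e. S 0 - verts A)
      \<subseteq> (SIGMA A':copies_through e. verts A' \<times> neighbours Q (verts A'))"
      using relabel_high_copy[OF assms _ conjunct1[OF WT]] WT by (fastforce simp: g_def)
    show "card (S 0) - card VH \<le> card (S 0 - verts A)" if "A \<in> high_copies_through e" for A
    proof -
      have "card (S 0) - card VH \<le> card (S 0) - card (verts A)"
        using card_verts_copy_le(2)[OF simple copy[OF high[OF that]]] by simp
      also have "\<dots> \<le> card (S 0 - verts A)" by (rule diff_card_le_card_Diff)
        (use card_verts_copy_le(1)[OF simple copy[OF high[OF that]]] in simp)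
      finally show ?thesis .
    qed
    show "card (verts A' \<times> neighbours Q (verts A')) \<le> card VH ^ 2 * max_degree Q"
      if "A' \<in> copies_through e" for A'
    proof -
      have fin: "finite (verts A')" and le: "card (verts A') \<le> card VH"
        using card_verts_copy_le[OF simple copy[OF that]] by auto
      have "card (verts A' \<times> neighbours Q (verts A'))
          \<le> card (verts A') * (card (verts A') * max_degree Q)"
        using card_neighbours_le[OF finite_verts_Q fin] by (simp add: card_cartesian_product)
      also have "\<dots> \<le> card VH * (card VH * max_degree Q)" using le by (intro mult_mono) auto
      finally show ?thesis by (simp add: power2_eq_square mult.assoc)
    qed
  qed
qed


lemma card_low_copies_through_ge:
  assumes "card VH < card (S 0)" and "e \<in> Q"
  shows "(1 - real (card VH) ^ 2 * real (max_degree Q) / (real (card (S 0)) - real (card VH)))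
      * real (card (copies_through e)) \<le> real (card (low_copies_through e))"
proof -
  define s where "s = real (card (S 0)) - real (card VH)"
  have "s > 0" using assms(1) by (simp add: s_def)
  have "copies_through e = low_copies_through e \<union> high_copies_through e"
    and "low_copies_through e \<inter> high_copies_through e = {}"
    unfolding low_copies_through_def high_copies_through_def by auto
  then have split: "card (copies_through e) = card (low_copies_through e) + card (high_copies_through e)"
    using finite_copies_through by (metis card_Un_disjoint finite_Un)
  have "real ((card (S 0) - card VH) * card (high_copies_through e))
      \<le> real (card VH ^ 2 * max_degree Q * card (copies_through e))"
    using card_high_copies_through_le[OF assms(2)] by (simp only: of_nat_le_iff)
  then have "s * card (high_copies_through e) \<le> real (card VH) ^ 2 * max_degree Q * card (copies_through e)"
    using assms(1) by (simp add: s_def of_nat_diff)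
  with \<open>s > 0\<close> split show ?thesis unfolding s_def[symmetric] by (simp add: field_simps)
qed

lemma diff_Q_mem_F_low_ext:
  assumes "e \<in> Q" and "A \<in> low_copies_through e"
  shows "A - Q \<in> restrict_fam (F_low VH EH n Q) (ext r S)"
proof -
  have A: "A \<in> copies_through e" "card (induced Q (verts A)) = 1"
    using assms(2) unfolding low_copies_through_def by auto
  with copies_through_inter_Q[OF assms(1)] have "A \<in> H_low VH EH n Q"
    unfolding H_low_def copies_through_def by simp
  moreover have "A - Q \<subseteq> ext r S" using A(1) assms(1) unfolding copies_through_def by blast
  ultimately show ?thesis unfolding restrict_fam_def F_low_def by blast
qed

lemma inj_on_diff_Q: "inj_on (\<lambda>(e, A). A - Q) (SIGMA e:Q. low_copies_through e)"
proof (rule inj_onI, clarsimp)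
  fix e1 A1 e2 A2
  assume e: "e1 \<in> Q" "e2 \<in> Q" and low: "A1 \<in> low_copies_through e1" "A2 \<in> low_copies_through e2"
    and eq: "A1 - Q = A2 - Q"
  have A: "A1 \<in> copies_through e1" "A2 \<in> copies_through e2"
    using low unfolding low_copies_through_def by auto
  have rest: "A1 - {e1} = A2 - {e2}"
    using eq copies_through_inter_Q[OF e(1) A(1)] copies_through_inter_Q[OF e(2) A(2)] by blast
  have "e1 = e2"
  proof (rule ccontr)
    assume "e1 \<noteq> e2"
    obtain p q where "p \<noteq> q" "e2 = {p, q}" using Q_edge_cases[OF e(2)] by blast
    with A(2) have "e2 \<subseteq> verts (A2 - {e2})"
      using endpoint_mem_verts_other_edges[of A2 p q] endpoint_mem_verts_other_edges[of A2 q p]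
      by (auto simp: insert_commute)
    then have "e2 \<in> induced Q (verts A1)"
      using rest e(2) unfolding induced_def verts_def by auto
    moreover have "e1 \<in> induced Q (verts A1)"
      using edge_mem_copies_through[OF A(1)] e(1) unfolding induced_def verts_def by auto
    ultimately show False
      using \<open>e1 \<noteq> e2\<close> low(1) unfolding low_copies_through_def by (auto simp: card_1_singleton_iff)
  qed
  with rest edge_mem_copies_through[OF A(1)] edge_mem_copies_through[OF A(2)]
  show "e1 = e2 \<and> A1 = A2" by blast
qed

lemma sum_card_low_copies_through_le:
  "(\<Sum>e\<in>Q. card (low_copies_through e)) \<le> card (restrict_fam (F_low VH EH n Q) (ext r S))"
proof -
  have "finite Q" using finite_verts_Q unfolding verts_def by (rule finite_UnionD)
  have "finite (restrict_fam (F_low VH EH n Q) (ext r S))"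
    unfolding restrict_fam_def F_low_def H_low_def using finite_copies[OF simple] by simp
  then have "card (SIGMA e:Q. low_copies_through e) \<le> card (restrict_fam (F_low VH EH n Q) (ext r S))"
    using inj_on_diff_Q diff_Q_mem_F_low_ext by (intro card_inj_on_le) auto
  moreover have "finite (low_copies_through e)" for e
    using finite_copies_through unfolding low_copies_through_def by simp
  ultimately show ?thesis using \<open>finite Q\<close> by simp
qed

end

theorem mainTheorem11:
  fixes VH :: "'h set" and EH :: "'h set set" and r n :: nat
    and S :: "nat \<Rightarrow> nat set" and Q :: "nat set set" and u v :: nat
  assumes H: "simple_graph VH EH"
    and crit: "edge_critical VH EH"
    and chi: "chromatic_number VH EH = r + 1" and r: "r + 1 \<ge> 3"
    and Ssub: "\<forall>i<r. S i \<subseteq> {1..n}"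
    and Sdisj: "\<forall>i<r. \<forall>j<r. i \<noteq> j \<longrightarrow> S i \<inter> S j = {}"
    and S1: "card (S 0) > card VH"
    and Q: "Q \<subseteq> Kn n" and QS: "\<forall>e\<in>Q. e \<subseteq> S 0"
    and uv: "u \<in> S 0" "v \<in> S 0" "u \<noteq> v"
  shows "real (card (restrict_fam (F_low VH EH n Q) (ext r S)))
    \<ge> (1 - real (card VH) ^ 2 * real (max_degree Q) / (real (card (S 0)) - real (card VH)))
       * real (card Q) * real (Ncop VH EH n (ext r S \<union> {{u, v}}))"
proof -
  interpret partite_host_edges VH EH r n S Q
    using H chi r Ssub Sdisj Q QS by unfold_locales auto
  define c where "c = 1 - real (card VH) ^ 2 * real (max_degree Q) / (real (card (S 0)) - real (card VH))"
  define N where "N = Ncop VH EH n (ext r S \<union> {{u, v}})"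
  have "card (copies_through e) = N" if e: "e \<in> Q" for e
  proof -
    obtain x y where "x \<noteq> y" "e = {x, y}" "x \<in> S 0" "y \<in> S 0" using Q_edge_cases[OF e] by blast
    then show ?thesis
      using Ncop_ext_edge_within_part[of 0 x y u v] two_le_r uv
      unfolding N_def Ncop_def copies_through_def by simp
  qed
  then have "(\<Sum>e\<in>Q. c * real N) \<le> (\<Sum>e\<in>Q. real (card (low_copies_through e)))"
    using card_low_copies_through_ge[OF S1] unfolding c_def by (intro sum_mono) simp
  also have "\<dots> \<le> real (card (restrict_fam (F_low VH EH n Q) (ext r S)))"
    using sum_card_low_copies_through_le by (simp flip: of_nat_sum)
  finally show ?thesis unfolding c_def[symmetric] N_def[symmetric] by (simp add: ac_simps)
qed

end
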